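(* For every max-min (unbounded space) algorithm $ALG$ for the classic bin packing problem and every positive integer $m$, there exists a sorted item sequence $I$ such that $OPT(I)>m$ and $ALG(I)>\frac{16}{15}\cdot(OPT(I)-1)$.
   Context: Classic bin packing: an item sequence $I=(a_1,\dots,a_n)\in(0,1]^n$ must be packed into bins of capacity $1$; $OPT(I)$ is the minimum number of non-empty bins, $ALG(I)$ the number of non-empty bins used by $ALG$. $I$ is sorted if $a_1\ge\cdots\ge a_n$. A max-min algorithm first sorts the input in non-increasing order and then repeatedly takes either the head (largest) or the tail (smallest) item of the currently remaining sorted sequence and packs it into some bin (any bin it can fit into, there being no limit on the number of open bins), each decision depending only on the items already packed and the current head and tail items, without seeing any other remaining items (in particular, not how many items remain). *)

theory Defs
  imports Complex_Main
begin

definition valid_packing :: "real list \<Rightarrow> (nat \<Rightarrow> nat) \<Rightarrow> bool" where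
  "valid_packing I f \<longleftrightarrow>
     (\<forall>b. (\<Sum>i | i < length I \<and> f i = b. I ! i) \<le> 1)"

definition bins_used :: "real list \<Rightarrow> (nat \<Rightarrow> nat) \<Rightarrow> nat" where
  "bins_used I f = card (f ` {..<length I})"

definition OPT :: "real list \<Rightarrow> nat" where
  "OPT I = (LEAST k. \<exists>f. valid_packing I f \<and> bins_used I f = k)"

text \<open>A history is the list of already packed items in packing order, each given as
  (size, index of the bin it was packed into). Bins are numbered 0,1,2,... in order of opening.\<close>
type_synonym history = "(real \<times> nat) list"

definition nbins :: "history \<Rightarrow> nat" where
  "nbins h = card (snd ` set h)"

definition load :: "history \<Rightarrow> nat \<Rightarrow> real" where
  "load h j = sum_list (map fst (filter (\<lambda>p. snd p = j) h))"

text \<open>A max-min algorithm is a function that, given the history and the current head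
  (largest remaining) and tail (smallest remaining) item sizes, returns
  (True = take head / False = take tail, target bin index). If the target index is an
  existing bin in which the item fits, the item goes there; otherwise a new bin is opened.
  (Every function yields a valid algorithm, and every valid max-min algorithm is such a function.)\<close>
type_synonym maxmin_alg = "history \<Rightarrow> real \<Rightarrow> real \<Rightarrow> bool \<times> nat"

function run :: "maxmin_alg \<Rightarrow> history \<Rightarrow> real list \<Rightarrow> history" where
  "run A h [] = h"
| "run A h (x # xs) =
     (let (takehead, j) = A h x (last (x # xs));
          y = (if takehead then x else last (x # xs));
          rest = (if takehead then xs else butlast (x # xs));
          b = (if j < nbins h \<and> load h j + y \<le> 1 then j else nbins h)
      in run A (h @ [(y, b)]) rest)"
  by pat_completeness auto
termination
  by (relation "measure (\<lambda>(A, h, xs). length xs)") (auto simp: Let_def split: if_splits prod.splits)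

definition ALG :: "maxmin_alg \<Rightarrow> real list \<Rightarrow> nat" where
  "ALG A I = nbins (run A [] I)"

end

theory Submission
  imports Defs "HOL-Combinatorics.Permutations"
begin

text \<open>
  Use large items 2/5, medium items 7/20 and small items 3/20, and inputs consisting of
  N large, K medium and M small items in this order. While both a large and a small item
  remain, a max-min algorithm sees head 2/5 and tail 3/20 on every such input, so it builds
  the same history (the common prefix) until it has taken 16k large or 15k small items.
  Measured in twentieths, a bin holding a large, b small and d medium items satisfies
  8a + 3b + 7d \<le> 20. Summing over all final bins a linear weight of a bin's final contents
  plus a penalty depending only on its prefix contents bounds the number of bins from below.
  If the large items run out first, either the prefix already uses 48k/5 bins (and N = 16k,
  M = 15k with OPT = 9k wins), or many prefix bins hold two large items and so can take at
  most one small item (N = 16k, M = 64k with OPT = 16k). If the small items run out first,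
  prefix bins with several small items lose room for items larger than 1/3, and one of the
  inputs (16k, 0, 15k), (16k, 8k, 15k), (30k, 0, 15k), with optimum 9k, 12k, 15k, needs at
  least 16/15 times the optimum.
\<close>

section \<open>Optimal packings\<close>

lemma valid_packing_iff:
  "valid_packing I f \<longleftrightarrow> (\<forall>b. (\<Sum>i<length I. if f i = b then I ! i else 0) \<le> 1)"
proof -
  have "(\<Sum>i | i < length I \<and> f i = b. I ! i) = (\<Sum>i<length I. if f i = b then I ! i else 0)"
    for b
  proof -
    have "{i. i < length I \<and> f i = b} = {i \<in> {..<length I}. f i = b}" by auto
    then show ?thesis by (simp only: sum.inter_filter[OF finite_lessThan])
  qed
  then show ?thesis by (simp add: valid_packing_def)
qed

lemma valid_packing_permute_list:
  assumes "p permutes {..<length I}" "valid_packing I f"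
  shows "valid_packing (permute_list p I) (f \<circ> p)"
  unfolding valid_packing_iff
proof
  fix b
  have "(\<Sum>i<length I. if f (p i) = b then permute_list p I ! i else 0)
      = (\<Sum>i<length I. if f (p i) = b then I ! p i else 0)"
    using assms(1) by (intro sum.cong) (auto simp: permute_list_nth)
  also have "\<dots> = (\<Sum>i<length I. if f i = b then I ! i else 0)"
    using sum.permute[OF assms(1), of "\<lambda>i. if f i = b then I ! i else 0"] by (simp add: comp_def)
  also have "\<dots> \<le> 1" using assms(2) by (simp add: valid_packing_iff)
  finally show
    "(\<Sum>i<length (permute_list p I). if (f \<circ> p) i = b then permute_list p I ! i else 0) \<le> 1"
    by simp
qed

lemma bins_used_permute_list:
  "p permutes {..<length I} \<Longrightarrow> bins_used (permute_list p I) (f \<circ> p) = bins_used I f"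
  unfolding bins_used_def length_permute_list image_comp[symmetric] by (simp add: permutes_image)

lemma OPT_le_bins_used: "valid_packing I f \<Longrightarrow> OPT I \<le> bins_used I f"
  unfolding OPT_def by (rule Least_le) blast

lemma OPT_le_bins_used_mset_eq:
  assumes "mset I = mset I'" "valid_packing I' f"
  shows "OPT I \<le> bins_used I' f"
proof -
  obtain p where "p permutes {..<length I'}" "permute_list p I' = I"
    using mset_eq_permutation[OF assms(1)] .
  then show ?thesis
    using OPT_le_bins_used valid_packing_permute_list[OF _ assms(2)] bins_used_permute_list
    by metis
qed

lemma sum_lessThan_add:
  fixes g :: "nat \<Rightarrow> 'a::comm_monoid_add"
  shows "(\<Sum>i<m + n. g i) = (\<Sum>i<m. g i) + (\<Sum>i<n. g (m + i))"
  by (induction n) (simp_all add: add.assoc)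

lemma valid_packing_concat:
  assumes "\<forall>g\<in>set G. sum_list g \<le> 1"
  shows "\<exists>f. valid_packing (concat G) f \<and> f ` {..<length (concat G)} \<subseteq> {..<length G}"
  using assms
proof (induction G)
  case Nil
  then show ?case by (simp add: valid_packing_def)
next
  case (Cons g G)
  then obtain f where f: "valid_packing (concat G) f" "f ` {..<length (concat G)} \<subseteq> {..<length G}"
    by auto
  define f' where "f' i = (if i < length g then 0 else Suc (f (i - length g)))" for i
  have "(\<Sum>i<length (g @ concat G). if f' i = b then (g @ concat G) ! i else 0) \<le> 1" for b
  proof -
    have split: "(\<Sum>i<length (g @ concat G). if f' i = b then (g @ concat G) ! i else 0)
        = (\<Sum>i<length g. if b = 0 then g ! i else 0)
          + (\<Sum>i<length (concat G). if Suc (f i) = b then concat G ! i else 0)"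
      unfolding length_append sum_lessThan_add
      by (intro arg_cong2[where f = "(+)"] sum.cong) (auto simp: f'_def nth_append)
    show ?thesis
    proof (cases b)
      case 0
      then show ?thesis
        using split Cons.prems by (simp add: sum_list_sum_nth atLeast0LessThan)
    next
      case (Suc b')
      then show ?thesis using split f(1) by (simp add: valid_packing_iff)
    qed
  qed
  moreover have "f' i < length (g # G)" if "i < length (g @ concat G)" for i
  proof (cases "i < length g")
    case False
    then have "i - length g \<in> {..<length (concat G)}" using that by auto
    then have "f (i - length g) < length G" using f(2) by blast
    then show ?thesis by (simp add: f'_def)
  qed (simp add: f'_def)
  ultimately show ?case by (auto simp: valid_packing_iff)
qed

lemma OPT_le_length_groups:
  assumes "mset I = mset (concat G)" "\<forall>g\<in>set G. sum_list g \<le> 1"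
  shows "OPT I \<le> length G"
proof -
  obtain f where f: "valid_packing (concat G) f" "f ` {..<length (concat G)} \<subseteq> {..<length G}"
    using valid_packing_concat[OF assms(2)] by blast
  have "bins_used (concat G) f \<le> length G"
    unfolding bins_used_def using card_mono[OF _ f(2)] by simp
  then show ?thesis using OPT_le_bins_used_mset_eq[OF assms(1) f(1)] by simp
qed

lemma mset_concat_replicate: "mset (concat (replicate n g)) = repeat_mset n (mset g)"
  by (induction n) auto

lemma sum_list_le_bins_used:
  assumes "valid_packing I f"
  shows "sum_list I \<le> bins_used I f"
proof -
  have "sum_list I = (\<Sum>b\<in>f ` {..<length I}. \<Sum>i | i \<in> {..<length I} \<and> f i = b. I ! i)"
    by (simp add: sum_list_sum_nth atLeast0LessThan sum.image_gen[of "{..<length I}" _ f])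
  also have "\<dots> \<le> (\<Sum>b\<in>f ` {..<length I}. 1)"
    using assms by (intro sum_mono) (simp add: valid_packing_def)
  finally show ?thesis by (simp add: bins_used_def)
qed

lemma OPT_attained:
  assumes "valid_packing I f"
  obtains g where "valid_packing I g" "bins_used I g = OPT I"
proof -
  have "\<exists>g. valid_packing I g \<and> bins_used I g = OPT I"
    unfolding OPT_def by (rule LeastI_ex) (use assms in blast)
  then show thesis using that by blast
qed

lemma sum_list_le_OPT:
  assumes "\<forall>x\<in>set I. x \<le> 1"
  shows "sum_list I \<le> OPT I"
proof -
  obtain f where "valid_packing I f"
    using valid_packing_concat[of "map (\<lambda>x. [x]) I"] assms by auto
  then obtain g where "valid_packing I g" "bins_used I g = OPT I"
    by (rule OPT_attained)
  then show ?thesis using sum_list_le_bins_used by metis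
qed

section \<open>Runs of a max-min algorithm\<close>

definition place :: "history \<Rightarrow> nat \<Rightarrow> real \<Rightarrow> history" where
  "place h j y = h @ [(y, if j < nbins h \<and> load h j + y \<le> 1 then j else nbins h)]"

lemma run_obtain_step:
  assumes "L \<noteq> []"
  obtains j y R where "run A h L = run A (place h j y) R" "mset L = add_mset y (mset R)"
proof -
  obtain x xs where L: "L = x # xs" using assms by (cases L) auto
  obtain th j where A: "A h x (last L) = (th, j)" by fastforce
  show thesis
  proof (cases th)
    case True
    then show thesis using that[of j x xs] A by (simp add: L place_def Let_def)
  next
    case False
    have "mset L = add_mset (last L) (mset (butlast L))"
      using mset_append[of "butlast L" "[last L]"] append_butlast_last_id[OF assms] by simp
    then show thesis using that[of j "last L" "butlast L"] A False by (simp add: L place_def Let_def)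
  qed
qed

lemma mset_map_fst_place: "mset (map fst (place h j y)) = add_mset y (mset (map fst h))"
  by (simp add: place_def)

lemma run_induct [case_names Nil step]:
  assumes Nil: "\<And>h. P h []"
    and step: "\<And>h L j y R. mset L = add_mset y (mset R) \<Longrightarrow>
      run A h L = run A (place h j y) R \<Longrightarrow> P (place h j y) R \<Longrightarrow> P h L"
  shows "P h L"
proof (induction "length L" arbitrary: h L rule: less_induct)
  case less
  show ?case
  proof (cases "L = []")
    case False
    then obtain j y R where run: "run A h L = run A (place h j y) R"
      and L: "mset L = add_mset y (mset R)" by (rule run_obtain_step)
    have "length R < length L" using L by (metis size_mset lessI size_add_mset)
    then show ?thesis using less step[OF L run] by blast
  qed (simp add: Nil)
qed

lemma run_eq_append: "\<exists>T. run A h L = h @ T \<and> mset (map fst T) = mset L"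
proof (induction h L rule: run_induct[where A = A])
  case (step h L j y R)
  then show ?case by (auto simp: place_def)
qed simp

definition wf_history :: "history \<Rightarrow> bool" where
  "wf_history h \<longleftrightarrow> snd ` set h = {..<nbins h} \<and> (\<forall>j. load h j \<le> 1)"

lemma wf_history_Nil: "wf_history []"
  by (simp add: wf_history_def nbins_def load_def)

lemma load_snoc: "load (h @ [(y, c)]) j = load h j + (if c = j then y else 0)"
  by (simp add: load_def)

lemma load_unused_bin: "j \<notin> snd ` set h \<Longrightarrow> load h j = 0"
  by (induction h) (auto simp: load_def)

lemma wf_history_snoc:
  assumes "wf_history h" "c \<le> nbins h" "load h c + y \<le> 1"
  shows "wf_history (h @ [(y, c)])"
proof -
  have "snd ` set (h @ [(y, c)]) = {..<max (nbins h) (Suc c)}"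
    using assms(1,2) by (auto simp: wf_history_def max_def)
  then show ?thesis
    using assms(1,3) by (auto simp: wf_history_def nbins_def load_snoc)
qed

lemma wf_history_place:
  assumes "wf_history h" "y \<le> 1"
  shows "wf_history (place h j y)"
proof -
  have "load h (nbins h) = 0"
    using assms(1) by (intro load_unused_bin) (auto simp: wf_history_def)
  then show ?thesis
    using assms by (auto simp: place_def intro: wf_history_snoc)
qed

lemma wf_history_run:
  "wf_history h \<Longrightarrow> \<forall>x\<in>set L. x \<le> 1 \<Longrightarrow> wf_history (run A h L)"
proof (induction h L rule: run_induct[where A = A])
  case (step h L j y R)
  have "y \<le> 1" "\<forall>x\<in>set R. x \<le> 1"
    using step.prems(2) step.hyps(1) by (metis set_mset_mset set_mset_add_mset_insert insert_iff)+
  then show ?case using step wf_history_place by metis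
qed simp

definition bin_count :: "history \<Rightarrow> real \<Rightarrow> nat \<Rightarrow> nat" where
  "bin_count h x j = count (mset h) (x, j)"

lemma sum_bin_count:
  "snd ` set h \<subseteq> {..<n} \<Longrightarrow> (\<Sum>j<n. bin_count h x j) = count (mset (map fst h)) x"
proof (induction h)
  case (Cons p h)
  obtain y c where p: "p = (y, c)" by fastforce
  have "(\<Sum>j<n. bin_count (p # h) x j)
      = (\<Sum>j<n. (if j = c then of_bool (y = x) else 0) + bin_count h x j)"
    by (intro sum.cong) (auto simp: bin_count_def p)
  also have "\<dots> = of_bool (y = x) + (\<Sum>j<n. bin_count h x j)"
    using Cons.prems by (simp add: sum.distrib p)
  finally show ?case using Cons by (simp add: p)
qed (simp add: bin_count_def)

lemma sum_bin_count_wf: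
  "wf_history h \<Longrightarrow> (\<Sum>j<nbins h. bin_count h x j) = count (mset (map fst h)) x"
  by (rule sum_bin_count) (simp add: wf_history_def)

lemma load_eq_sum_bin_count:
  assumes "finite S" "set (map fst h) \<subseteq> S"
  shows "load h j = (\<Sum>x\<in>S. x * bin_count h x j)"
  using assms(2)
proof (induction h)
  case (Cons p h)
  obtain y c where p: "p = (y, c)" by fastforce
  have "(\<Sum>x\<in>S. x * bin_count (p # h) x j)
      = (\<Sum>x\<in>S. (if x = y then (if c = j then y else 0) else 0) + x * bin_count h x j)"
    by (intro sum.cong) (auto simp: bin_count_def p algebra_simps)
  also have "\<dots> = (if c = j then y else 0) + (\<Sum>x\<in>S. x * bin_count h x j)"
    using Cons.prems assms(1) by (simp add: sum.distrib p)
  finally show ?case using Cons by (simp add: p load_def)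
qed (simp add: bin_count_def load_def)

lemma bin_capacity:
  assumes "wf_history h" "set (map fst h) \<subseteq> {2/5, 3/20, 7/20}"
  shows "8 * bin_count h (2/5) j + 3 * bin_count h (3/20) j + 7 * bin_count h (7/20) j \<le> 20"
proof -
  have "load h j \<le> 1" using assms(1) by (simp add: wf_history_def)
  then have "8 * real (bin_count h (2/5) j) + 3 * bin_count h (3/20) j + 7 * bin_count h (7/20) j \<le> 20"
    by (simp add: load_eq_sum_bin_count[OF _ assms(2)])
  then show ?thesis by linarith
qed

lemma bin_count_append_mono: "bin_count h x j \<le> bin_count (h @ T) x j"
  by (simp add: bin_count_def)

lemma nbins_append_mono: "nbins h \<le> nbins (h @ T)"
  unfolding nbins_def by (rule card_mono) auto

section \<open>The adversarial inputs\<close>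

lemma sorted_wrt_replicate: "R x x \<Longrightarrow> sorted_wrt R (replicate n x)"
  by (induction n) auto

definition three_size_input :: "nat \<Rightarrow> nat \<Rightarrow> nat \<Rightarrow> real list" where
  "three_size_input N K M = replicate N (2/5) @ replicate K (7/20) @ replicate M (3/20)"

lemma set_three_size_input: "set (three_size_input N K M) \<subseteq> {2/5, 3/20, 7/20}"
  by (auto simp: three_size_input_def set_replicate_conv_if)

lemma count_three_size_input:
  "count (mset (three_size_input N K M)) (2/5) = N"
  "count (mset (three_size_input N K M)) (3/20) = M"
  "count (mset (three_size_input N K M)) (7/20) = K"
  by (simp_all add: three_size_input_def)

lemma sorted_three_size_input: "sorted_wrt (\<ge>) (three_size_input N K M)"
  by (auto simp: three_size_input_def sorted_wrt_append sorted_wrt_replicate set_replicate_conv_if)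

lemma two_fifths_le_OPT: "2/5 * real N \<le> OPT (three_size_input N K M)"
proof -
  have "2/5 * real N \<le> sum_list (three_size_input N K M)"
    by (simp add: three_size_input_def sum_list_replicate)
  also have "\<dots> \<le> OPT (three_size_input N K M)"
    using set_three_size_input[of N K M] by (intro sum_list_le_OPT) auto
  finally show ?thesis .
qed

lemma OPT_three_size_input_le:
  "OPT (three_size_input (16 * k) 0 (64 * k)) \<le> 16 * k"
  "OPT (three_size_input (16 * k) 0 (15 * k)) \<le> 9 * k"
  "OPT (three_size_input (16 * k) (8 * k) (15 * k)) \<le> 12 * k"
  "OPT (three_size_input (30 * k) 0 (15 * k)) \<le> 15 * k"
proof -
  show "OPT (three_size_input (16 * k) 0 (64 * k)) \<le> 16 * k"
    by (rule order_trans[OF OPT_le_length_groups[where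
          G = "replicate (16 * k) [2/5, 3/20, 3/20, 3/20, 3/20]"]])
      (auto simp: three_size_input_def mset_concat_replicate multiset_eq_iff set_replicate_conv_if)
  show "OPT (three_size_input (16 * k) 0 (15 * k)) \<le> 9 * k"
    by (rule order_trans[OF OPT_le_length_groups[where
          G = "replicate (7 * k) [2/5, 2/5, 3/20] @ replicate (2 * k) [2/5, 3/20, 3/20, 3/20, 3/20]"]])
      (auto simp: three_size_input_def mset_concat_replicate multiset_eq_iff set_replicate_conv_if)
  show "OPT (three_size_input (16 * k) (8 * k) (15 * k)) \<le> 12 * k"
    by (rule order_trans[OF OPT_le_length_groups[where
          G = "replicate (8 * k) [2/5, 2/5, 3/20] @ replicate (3 * k) [7/20, 7/20, 3/20, 3/20]
               @ replicate k [7/20, 7/20, 3/20]"]])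
      (auto simp: three_size_input_def mset_concat_replicate multiset_eq_iff set_replicate_conv_if)
  show "OPT (three_size_input (30 * k) 0 (15 * k)) \<le> 15 * k"
    by (rule order_trans[OF OPT_le_length_groups[where
          G = "replicate (15 * k) [2/5, 2/5, 3/20]"]])
      (auto simp: three_size_input_def mset_concat_replicate multiset_eq_iff set_replicate_conv_if)
qed

lemma run_three_size_input_step:
  "run A h (three_size_input (Suc p) K (Suc q)) =
     (case A h (2/5) (3/20) of (th, j) \<Rightarrow>
        if th then run A (place h j (2/5)) (three_size_input p K (Suc q))
        else run A (place h j (3/20)) (three_size_input (Suc p) K q))"
proof -
  have L: "2/5 # three_size_input p K (Suc q) = three_size_input (Suc p) K (Suc q)"
    by (simp add: three_size_input_def)
  have "last (three_size_input (Suc p) K (Suc q)) = 3/20"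
    "butlast (three_size_input (Suc p) K (Suc q)) = three_size_input (Suc p) K q"
    by (simp_all add: three_size_input_def butlast_append butlast_conv_take del: replicate_Suc)
  note run = run.simps(2)[of A h "2/5" "three_size_input p K (Suc q)", unfolded L this]
  show ?thesis unfolding run by (simp add: place_def Let_def split: prod.split)
qed

fun common_prefix :: "maxmin_alg \<Rightarrow> nat \<Rightarrow> history" where
  "common_prefix A 0 = []"
| "common_prefix A (Suc t) =
     (case A (common_prefix A t) (2/5) (3/20) of (th, j) \<Rightarrow>
        place (common_prefix A t) j (if th then 2/5 else 3/20))"

definition taken_large :: "maxmin_alg \<Rightarrow> nat \<Rightarrow> nat" where
  "taken_large A t = count (mset (map fst (common_prefix A t))) (2/5)"

definition taken_small :: "maxmin_alg \<Rightarrow> nat \<Rightarrow> nat" where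
  "taken_small A t = count (mset (map fst (common_prefix A t))) (3/20)"

lemma wf_history_common_prefix: "wf_history (common_prefix A t)"
  by (induction t) (auto simp: wf_history_Nil split: prod.split intro!: wf_history_place)

lemma sizes_common_prefix: "set (map fst (common_prefix A t)) \<subseteq> {2/5, 3/20, 7/20}"
  by (induction t) (auto simp: place_def split: prod.split)

lemma taken_Suc:
  "taken_large A (Suc t) = Suc (taken_large A t) \<and> taken_small A (Suc t) = taken_small A t \<or>
   taken_large A (Suc t) = taken_large A t \<and> taken_small A (Suc t) = Suc (taken_small A t)"
  by (auto simp: taken_large_def taken_small_def place_def split: prod.split)

lemma taken_large_add_taken_small: "taken_large A t + taken_small A t = t"
proof (induction t)
  case (Suc t)
  then show ?case using taken_Suc[of A t] by linarith
qed (simp add: taken_large_def taken_small_def)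

lemma run_three_size_input_common_prefix:
  assumes "\<forall>t'<t. taken_large A t' < N \<and> taken_small A t' < M"
  shows "run A [] (three_size_input N K M) =
         run A (common_prefix A t) (three_size_input (N - taken_large A t) K (M - taken_small A t))"
  using assms
proof (induction t)
  case (Suc t)
  have "taken_large A t < N" "taken_small A t < M" using Suc.prems by auto
  then obtain p q where pq: "N - taken_large A t = Suc p" "M - taken_small A t = Suc q"
    using Suc_diff_Suc by metis
  obtain th j where A: "A (common_prefix A t) (2/5) (3/20) = (th, j)" by fastforce
  have prefix: "common_prefix A (Suc t) = place (common_prefix A t) j (if th then 2/5 else 3/20)"
    using A by simp
  have "taken_large A (Suc t) = (if th then Suc (taken_large A t) else taken_large A t)"
    "taken_small A (Suc t) = (if th then taken_small A t else Suc (taken_small A t))"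
    unfolding taken_large_def taken_small_def prefix mset_map_fst_place by simp_all
  then have remaining: "N - taken_large A (Suc t) = (if th then p else Suc p)"
    "M - taken_small A (Suc t) = (if th then Suc q else q)"
    using pq by simp_all arith+
  have "run A [] (three_size_input N K M) =
        run A (common_prefix A t) (three_size_input (Suc p) K (Suc q))"
    using Suc.IH Suc.prems pq by simp
  also have "\<dots> = run A (common_prefix A (Suc t))
      (three_size_input (N - taken_large A (Suc t)) K (M - taken_small A (Suc t)))"
    unfolding run_three_size_input_step A prefix remaining by simp
  finally show ?case .
qed (simp add: taken_large_def taken_small_def)

lemma first_exhaustion:
  assumes "0 < N" "0 < M"
  obtains t where "\<forall>t'<t. taken_large A t' < N \<and> taken_small A t' < M"
    "taken_large A t = N \<and> taken_small A t < M \<or> taken_large A t < N \<and> taken_small A t = M"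
proof -
  let ?exhausted = "\<lambda>t. N \<le> taken_large A t \<or> M \<le> taken_small A t"
  have "?exhausted (N + M)" using taken_large_add_taken_small[of A "N + M"] by linarith
  moreover have "\<not> ?exhausted 0" using assms by (simp add: taken_large_def taken_small_def)
  ultimately obtain s where s: "\<forall>i\<le>s. \<not> ?exhausted i" "?exhausted (Suc s)"
    using ex_least_nat_less[of ?exhausted "N + M"] by blast
  show thesis
  proof (rule that[of "Suc s"])
    show "\<forall>t'<Suc s. taken_large A t' < N \<and> taken_small A t' < M"
      using s(1) by (auto simp: less_Suc_eq_le)
    show "taken_large A (Suc s) = N \<and> taken_small A (Suc s) < M \<or>
          taken_large A (Suc s) < N \<and> taken_small A (Suc s) = M"
    proof -
      have "taken_large A s < N" "taken_small A s < M" using s(1) by auto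
      then show ?thesis using s(2) taken_Suc[of A s] by auto
    qed
  qed
qed

lemma run_from_common_prefix:
  assumes "\<forall>t'<t. taken_large A t' < N \<and> taken_small A t' < M"
  obtains T where "run A [] (three_size_input N K M) = common_prefix A t @ T"
    "wf_history (common_prefix A t @ T)"
    "mset (map fst (common_prefix A t @ T)) = mset (three_size_input N K M)"
proof -
  have sizes: "\<forall>x\<in>set (three_size_input N' K M'). x \<le> 1" for N' M'
    by (auto simp: three_size_input_def set_replicate_conv_if)
  obtain T where T: "run A [] (three_size_input N K M) = common_prefix A t @ T"
    using run_eq_append run_three_size_input_common_prefix[OF assms] by metis
  moreover have "wf_history (run A [] (three_size_input N K M))"
    using wf_history_run[OF wf_history_Nil sizes] .
  moreover have "mset (map fst (run A [] (three_size_input N K M))) = mset (three_size_input N K M)"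
    using run_eq_append[of A "[]" "three_size_input N K M"] by auto
  ultimately show thesis using that by simp
qed

lemma ALG_ge_nbins_common_prefix:
  "\<forall>t'<t. taken_large A t' < N \<and> taken_small A t' < M \<Longrightarrow>
   nbins (common_prefix A t) \<le> ALG A (three_size_input N K M)"
  by (metis ALG_def nbins_append_mono run_from_common_prefix)

lemma weighting_bound:
  fixes wa wb wd c :: nat and g :: "nat \<Rightarrow> nat \<Rightarrow> nat"
  assumes pre: "\<forall>t'<t. taken_large A t' < N \<and> taken_small A t' < M"
    and per_bin: "\<And>xa xb xd pa pb. 8 * xa + 3 * xb + 7 * xd \<le> 20 \<Longrightarrow>
      pa \<le> xa \<Longrightarrow> pb \<le> xb \<Longrightarrow> wa * xa + wb * xb + wd * xd + g pa pb \<le> c"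
  shows "wa * N + wb * M + wd * K
      + (\<Sum>j<nbins (common_prefix A t).
           g (bin_count (common_prefix A t) (2/5) j) (bin_count (common_prefix A t) (3/20) j))
    \<le> c * ALG A (three_size_input N K M)"
proof -
  define H0 where "H0 = common_prefix A t"
  obtain T where run: "run A [] (three_size_input N K M) = H0 @ T"
    and wf: "wf_history (H0 @ T)" and items: "mset (map fst (H0 @ T)) = mset (three_size_input N K M)"
    using run_from_common_prefix[OF pre] unfolding H0_def by metis
  define H where "H = H0 @ T"
  define n where "n = nbins H"
  let ?g = "\<lambda>j. g (bin_count H0 (2/5) j) (bin_count H0 (3/20) j)"
  have "set (map fst H) \<subseteq> {2/5, 3/20, 7/20}"
    using items unfolding H_def by (metis set_mset_mset set_three_size_input)
  then have capacity:
    "8 * bin_count H (2/5) j + 3 * bin_count H (3/20) j + 7 * bin_count H (7/20) j \<le> 20" for j using bin_capacity wf unfolding H_def by blast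
  have "(\<Sum>j<nbins H0. ?g j) \<le> (\<Sum>j<n. ?g j)"
    using nbins_append_mono[of H0 T] unfolding n_def H_def by (intro sum_mono2) auto
  moreover have "(\<Sum>j<n. wa * bin_count H (2/5) j + wb * bin_count H (3/20) j
                     + wd * bin_count H (7/20) j + ?g j) \<le> (\<Sum>j<n. c)"
    unfolding H_def by (intro sum_mono per_bin capacity[unfolded H_def] bin_count_append_mono)
  moreover have "(\<Sum>j<n. wa * bin_count H (2/5) j + wb * bin_count H (3/20) j
                     + wd * bin_count H (7/20) j + ?g j)
      = wa * N + wb * M + wd * K + (\<Sum>j<n. ?g j)"
    using items wf unfolding n_def H_def
    by (simp add: sum.distrib sum_distrib_left[symmetric] sum_bin_count_wf count_three_size_input)
  ultimately show ?thesis
    using run unfolding ALG_def H0_def[symmetric] n_def H_def by (simp add: mult.commute)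
qed

section \<open>Lower bound\<close>

definition has_hard_input :: "maxmin_alg \<Rightarrow> nat \<Rightarrow> bool" where
  "has_hard_input A k \<longleftrightarrow> (\<exists>N K M. 16 * k \<le> N \<and>
     16 * OPT (three_size_input N K M) \<le> 15 * ALG A (three_size_input N K M))"

lemma has_hard_inputI:
  assumes "16 * k \<le> N" "OPT (three_size_input N K M) \<le> U"
    "16 * U \<le> 15 * ALG A (three_size_input N K M)"
  shows "has_hard_input A k"
  using assms unfolding has_hard_input_def by (meson le_trans mult_le_mono2)

lemma has_hard_input_if_many_prefix_bins:
  assumes pre: "\<forall>t'<t. taken_large A t' < 16 * k \<and> taken_small A t' < 15 * k"
    and many: "48 * k \<le> 5 * nbins (common_prefix A t)"
  shows "has_hard_input A k"
proof (rule has_hard_inputI)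
  show "OPT (three_size_input (16 * k) 0 (15 * k)) \<le> 9 * k"
    by (rule OPT_three_size_input_le)
  show "16 * (9 * k) \<le> 15 * ALG A (three_size_input (16 * k) 0 (15 * k))"
    using ALG_ge_nbins_common_prefix[OF pre, of 0] many by linarith
qed simp

lemma two_large_weight_bound:
  "8 * xa + 3 * xb + 7 * xd \<le> (20::nat) \<Longrightarrow> pa \<le> xa \<Longrightarrow>
   2 * xa + 1 * xb + 0 * xd + of_bool (2 \<le> pa) \<le> 6"
  by auto

lemma has_hard_input_if_large_exhausted:
  assumes pre: "\<forall>t'<t. taken_large A t' < 16 * k \<and> taken_small A t' < 15 * k"
    and large: "taken_large A t = 16 * k"
  shows "has_hard_input A k"
proof -
  define H0 where "H0 = common_prefix A t"
  define doubles where "doubles = (\<Sum>j<nbins H0. of_bool (2 \<le> bin_count H0 (2/5) j) :: nat)"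
  have "16 * k = (\<Sum>j<nbins H0. bin_count H0 (2/5) j)"
    using large sum_bin_count_wf[OF wf_history_common_prefix] unfolding H0_def taken_large_def by simp
  also have "\<dots> \<le> (\<Sum>j<nbins H0. 1 + of_bool (2 \<le> bin_count H0 (2/5) j))"
  proof (rule sum_mono)
    fix j
    show "bin_count H0 (2/5) j \<le> 1 + of_bool (2 \<le> bin_count H0 (2/5) j)"
      using bin_capacity[OF wf_history_common_prefix sizes_common_prefix, of A t j]
      unfolding H0_def by (cases "2 \<le> bin_count (common_prefix A t) (2/5) j") auto
  qed
  finally have prefix: "16 * k \<le> nbins H0 + doubles"
    unfolding doubles_def sum.distrib by simp
  have "\<forall>t'<t. taken_large A t' < 16 * k \<and> taken_small A t' < 64 * k"
    using pre by fastforce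
  then have weights: "2 * (16 * k) + 1 * (64 * k) + 0 * 0 + doubles
      \<le> 6 * ALG A (three_size_input (16 * k) 0 (64 * k))"
    unfolding doubles_def H0_def by (rule weighting_bound) (rule two_large_weight_bound)
  show ?thesis
  proof (cases "48 * k \<le> 5 * nbins H0")
    case True
    then show ?thesis using has_hard_input_if_many_prefix_bins[OF pre] by (simp add: H0_def)
  next
    case False
    then have "16 * (16 * k) \<le> 15 * ALG A (three_size_input (16 * k) 0 (64 * k))"
      using prefix weights by linarith
    then show ?thesis by (intro has_hard_inputI[OF _ OPT_three_size_input_le(1)]) auto
  qed
qed

text \<open>
  A bin holds at most two items larger than 1/3. For a bin containing pa large and pb small
  items, lost_slots_medium pa pb (resp. lost_slots_large pa pb) is the number of these two
  slots that can no longer be filled by items of size at least 7/20 (resp. 2/5); slots taken by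
  the pa large items themselves are not lost.
\<close>

definition lost_slots_medium :: "nat \<Rightarrow> nat \<Rightarrow> nat" where
  "lost_slots_medium pa pb =
     (if 5 \<le> pb then 2 else if 3 \<le> pb \<or> (1 \<le> pa \<and> 2 \<le> pb) then 1 else 0)"

definition lost_slots_large :: "nat \<Rightarrow> nat \<Rightarrow> nat" where
  "lost_slots_large pa pb = (if 5 \<le> pb then 2 else if 2 \<le> pb then 1 else 0)"

lemma lost_slots_medium_bound:
  "8 * xa + 3 * xb + 7 * xd \<le> (20::nat) \<Longrightarrow> pa \<le> xa \<Longrightarrow> pb \<le> xb \<Longrightarrow>
   1 * xa + 0 * xb + 1 * xd + lost_slots_medium pa pb \<le> 2"
  unfolding lost_slots_medium_def by auto

lemma lost_slots_large_bound:
  "8 * xa + 3 * xb + 7 * xd \<le> (20::nat) \<Longrightarrow> pa \<le> xa \<Longrightarrow> pb \<le> xb \<Longrightarrow>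
   1 * xa + 0 * xb + 0 * xd + lost_slots_large pa pb \<le> 2"
  unfolding lost_slots_large_def by auto

text \<open>
  The coefficients are the multipliers under which the three thresholds in the proof below
  (48k/5 prefix bins, 8k/5 lost medium slots, 2k lost large slots) cannot all fail.
\<close>

lemma small_count_le_lost_slots:
  "8 * pa + 3 * pb + 7 * pd \<le> (20::nat) \<Longrightarrow>
   48 * pb \<le> 49 + 96 * lost_slots_medium pa pb + 48 * lost_slots_large pa pb"
  unfolding lost_slots_medium_def lost_slots_large_def by auto

lemma has_hard_input_if_small_exhausted:
  assumes pre: "\<forall>t'<t. taken_large A t' < 16 * k \<and> taken_small A t' < 15 * k"
    and small: "taken_small A t = 15 * k"
  shows "has_hard_input A k"
proof -
  define H0 where "H0 = common_prefix A t"
  let ?lm = "\<lambda>j. lost_slots_medium (bin_count H0 (2/5) j) (bin_count H0 (3/20) j)"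
  let ?ll = "\<lambda>j. lost_slots_large (bin_count H0 (2/5) j) (bin_count H0 (3/20) j)"
  define lost_medium where "lost_medium = (\<Sum>j<nbins H0. ?lm j)"
  define lost_large where "lost_large = (\<Sum>j<nbins H0. ?ll j)"
  have "48 * (15 * k) = (\<Sum>j<nbins H0. 48 * bin_count H0 (3/20) j)"
    using small sum_bin_count_wf[OF wf_history_common_prefix] unfolding H0_def taken_small_def
    by (simp add: sum_distrib_left[symmetric])
  also have "\<dots> \<le> (\<Sum>j<nbins H0. 49 + 96 * ?lm j + 48 * ?ll j)"
    unfolding H0_def
    by (rule sum_mono, rule small_count_le_lost_slots,
        rule bin_capacity[OF wf_history_common_prefix sizes_common_prefix])
  finally have prefix: "48 * (15 * k) \<le> 49 * nbins H0 + 96 * lost_medium + 48 * lost_large"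
    unfolding lost_medium_def lost_large_def sum.distrib sum_distrib_left[symmetric] by simp
  have "\<forall>t'<t. taken_large A t' < 30 * k \<and> taken_small A t' < 15 * k"
    using pre by fastforce
  then have weights_large: "1 * (30 * k) + 0 * (15 * k) + 0 * 0 + lost_large
      \<le> 2 * ALG A (three_size_input (30 * k) 0 (15 * k))"
    unfolding lost_large_def H0_def by (rule weighting_bound) (rule lost_slots_large_bound)
  have weights_medium: "1 * (16 * k) + 0 * (15 * k) + 1 * (8 * k) + lost_medium
      \<le> 2 * ALG A (three_size_input (16 * k) (8 * k) (15 * k))"
    unfolding lost_medium_def H0_def using pre by (rule weighting_bound) (rule lost_slots_medium_bound)
  consider "48 * k \<le> 5 * nbins H0" | "8 * k \<le> 5 * lost_medium" | "2 * k < lost_large"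
    using prefix by linarith
  then show ?thesis
  proof cases
    case 1
    then show ?thesis using has_hard_input_if_many_prefix_bins[OF pre] by (simp add: H0_def)
  next
    case 2
    then have "16 * (12 * k) \<le> 15 * ALG A (three_size_input (16 * k) (8 * k) (15 * k))"
      using weights_medium by linarith
    then show ?thesis by (intro has_hard_inputI[OF _ OPT_three_size_input_le(3)]) auto
  next
    case 3
    then have "16 * (15 * k) \<le> 15 * ALG A (three_size_input (30 * k) 0 (15 * k))"
      using weights_large by linarith
    then show ?thesis by (intro has_hard_inputI[OF _ OPT_three_size_input_le(4)]) auto
  qed
qed

lemma has_hard_input_if_pos:
  assumes "0 < k"
  shows "has_hard_input A k"
proof -
  obtain t where pre: "\<forall>t'<t. taken_large A t' < 16 * k \<and> taken_small A t' < 15 * k"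
    and "taken_large A t = 16 * k \<and> taken_small A t < 15 * k \<or>
         taken_large A t < 16 * k \<and> taken_small A t = 15 * k"
    using first_exhaustion[of "16 * k" "15 * k"] assms by auto
  then show ?thesis
    using has_hard_input_if_large_exhausted[OF pre] has_hard_input_if_small_exhausted[OF pre] by blast
qed

theorem theorem4:
  fixes A :: maxmin_alg and m :: nat
  assumes "m \<ge> 1"
  shows "\<exists>I :: real list. (\<forall>x\<in>set I. 0 < x \<and> x \<le> 1) \<and> sorted_wrt (\<ge>) I
           \<and> OPT I > m \<and> real (ALG A I) > 16/15 * (real (OPT I) - 1)"
proof -
  obtain N K M where N: "16 * m \<le> N"
    and ratio: "16 * OPT (three_size_input N K M) \<le> 15 * ALG A (three_size_input N K M)"
    using has_hard_input_if_pos[of m A] assms unfolding has_hard_input_def by auto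
  let ?I = "three_size_input N K M"
  have "real m < 2/5 * real N" using N assms by linarith
  then have OPT: "m < OPT ?I" using two_fifths_le_OPT[of N K M] by linarith
  have "real (16 * OPT ?I) \<le> real (15 * ALG A ?I)"
    using ratio by (simp only: of_nat_le_iff)
  then have ALG: "real (ALG A ?I) > 16/15 * (real (OPT ?I) - 1)" by simp
  have "\<forall>x\<in>set ?I. 0 < x \<and> x \<le> 1"
    using set_three_size_input by fastforce
  with OPT ALG show ?thesis using sorted_three_size_input by blast
qed

end
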